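(* Under the Lyapunov condition, let $\widetilde{\sigma}^{(n)}_{\min}=\min_{1\le k\le n-1}|\widetilde{\lambda}^{(n)}_k|$ and $\widetilde{\sigma}^{(n)}_{\max}=\max_{1\le k\le n-1}|\widetilde{\lambda}^{(n)}_k|$. Then for every $x,y\in\mathbb{R}$, \[ \lim_{n\to\infty}\left|\mathbb{P}\Big(\sigma^{(n)}_{\min}\le x,\ \frac{\sigma^{(n)}_{\max}-\mathfrak{a}_n}{\mathfrak{b}_n}\le y\Big)-\mathbb{P}\Big(\widetilde{\sigma}^{(n)}_{\min}\le x,\ \frac{\widetilde{\sigma}^{(n)}_{\max}-\mathfrak{a}_n}{\mathfrak{b}_n}\le y\Big)\right|=0. \]
   Context: Lyapunov condition: $(\xi_j)_{j\in\mathbb{N}_0}$ is a sequence of i.i.d. non-degenerate real random variables on a probability space $(\Omega,\mathcal{F},\mathbb{P})$ with $\mathbb{E}[\xi_0]=0$, $\mathbb{E}[\xi_0^2]=1$, and there is $\delta>0$ with $\mathbb{E}[|\xi_0|^{2+\delta}]<\infty$. With $\omega_n=\exp(2\pi\mathsf{i}/n)$, $\lambda^{(n)}_k=\sum_{j=0}^{n-1}\xi_j\omega_n^{kj}$, $\sigma^{(n)}_{\min}=\min_{0\le k\le n-1}|\lambda^{(n)}_k|$, $\sigma^{(n)}_{\max}=\max_{0\le k\le n-1}|\lambda^{(n)}_k|$. With $s=2+\delta$, $\widetilde{\xi}^{(n)}_j=\xi_j\mathbf{1}\{|\xi_j|\le n^{1/s}\}-\mathbb{E}[\xi_j\mathbf{1}\{|\xi_j|\le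 n^{1/s}\}]$ and $\widetilde{\lambda}^{(n)}_k=\sum_{j=0}^{n-1}\widetilde{\xi}^{(n)}_j\omega_n^{kj}$ for $1\le k\le n-1$. $\mathfrak{a}_n=\sqrt{n\ln(n/2)}$, $\mathfrak{b}_n=\frac12\sqrt{n/\ln(n/2)}$ for $n\ge3$. *)

theory Defs
  imports "HOL-Probability.Probability"
begin

definition omega :: "nat \<Rightarrow> complex" where
  "omega n = exp (2 * of_real pi * \<i> / of_nat n)"

definition lam :: "(nat \<Rightarrow> 'a \<Rightarrow> real) \<Rightarrow> nat \<Rightarrow> nat \<Rightarrow> 'a \<Rightarrow> complex" where
  "lam X n k \<omega> = (\<Sum>j<n. complex_of_real (X j \<omega>) * omega n ^ (k * j))"

definition sig_min :: "(nat \<Rightarrow> 'a \<Rightarrow> real) \<Rightarrow> nat \<Rightarrow> 'a \<Rightarrow> real" where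
  "sig_min X n \<omega> = Min ((\<lambda>k. cmod (lam X n k \<omega>)) ` {0..<n})"

definition sig_max :: "(nat \<Rightarrow> 'a \<Rightarrow> real) \<Rightarrow> nat \<Rightarrow> 'a \<Rightarrow> real" where
  "sig_max X n \<omega> = Max ((\<lambda>k. cmod (lam X n k \<omega>)) ` {0..<n})"

definition trunc_var :: "'a measure \<Rightarrow> (nat \<Rightarrow> 'a \<Rightarrow> real) \<Rightarrow> real \<Rightarrow> nat \<Rightarrow> nat \<Rightarrow> 'a \<Rightarrow> real" where
  "trunc_var M X s n j \<omega> =
     (if \<bar>X j \<omega>\<bar> \<le> real n powr (1 / s) then X j \<omega> else 0)
     - (LINT t|M. (if \<bar>X j t\<bar> \<le> real n powr (1 / s) then X j t else 0))"

definition tsig_min :: "'a measure \<Rightarrow> (nat \<Rightarrow> 'a \<Rightarrow> real) \<Rightarrow> real \<Rightarrow> nat \<Rightarrow> 'a \<Rightarrow> real" where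
  "tsig_min M X s n \<omega> = Min ((\<lambda>k. cmod (lam (trunc_var M X s n) n k \<omega>)) ` {1..<n})"

definition tsig_max :: "'a measure \<Rightarrow> (nat \<Rightarrow> 'a \<Rightarrow> real) \<Rightarrow> real \<Rightarrow> nat \<Rightarrow> 'a \<Rightarrow> real" where
  "tsig_max M X s n \<omega> = Max ((\<lambda>k. cmod (lam (trunc_var M X s n) n k \<omega>)) ` {1..<n})"

definition a_seq :: "nat \<Rightarrow> real" where
  "a_seq n = sqrt (real n * ln (real n / 2))"

definition b_seq :: "nat \<Rightarrow> real" where
  "b_seq n = sqrt (real n / ln (real n / 2)) / 2"

end

theory Submission
  imports Defs "HOL-Real_Asymp.Real_Asymp"
begin

text \<open>For \<open>1 \<le> k < n\<close> the powers \<open>\<omega>\<^sub>n^(k j)\<close>, \<open>j < n\<close>, sum to zero, so recentring all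
  variables by one common constant leaves \<open>\<lambda>\<^sub>k\<close> unchanged; and truncation at \<open>n powr (1/s)\<close>
  changes nothing outside the event that some \<open>|\<xi>\<^sub>j| > n powr (1/s)\<close>, whose probability is at most
  \<open>n P(|\<xi>\<^sub>0| powr s > n) \<longrightarrow> 0\<close> by dominated convergence. Hence the two events can only differ
  through \<open>|\<lambda>\<^sub>0| = |S\<^sub>n|\<close>, which enters \<open>\<sigma>\<^sub>m\<^sub>i\<^sub>n\<close> and \<open>\<sigma>\<^sub>m\<^sub>a\<^sub>x\<close> but not their truncated versions. By the
  central limit theorem, \<open>|S\<^sub>n|\<close> lies with probability tending to one strictly above \<open>x\<close> and
  below \<open>a\<^sub>n + b\<^sub>n y\<close> (which grows faster than \<open>\<surd>n\<close>), and then it affects neither the condition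
  on the minimum nor the one on the maximum.\<close>

lemma omega_power: "omega n ^ k = exp (2 * of_real pi * \<i> * of_nat k / of_nat n)"
  unfolding omega_def by (simp add: exp_of_nat_mult[symmetric] mult_ac)

lemma sum_omega_power_eq_0:
  assumes "1 \<le> k" "k < n"
  shows "(\<Sum>j<n. omega n ^ (k * j)) = 0"
proof -
  have "omega n ^ k \<noteq> 1"
    using assms by (auto simp: omega_power complex_root_unity_eq_1 dest: dvd_imp_le)
  moreover have "(omega n ^ k) ^ n = 1"
    unfolding power_mult[symmetric] using assms
    by (subst omega_power, subst complex_root_unity_eq_1) auto
  ultimately show ?thesis
    by (simp add: sum_gp_strict power_mult)
qed

lemma lam_cong:
  assumes "\<And>j. j < n \<Longrightarrow> X j \<omega> = Y j \<omega>"
  shows "lam X n k \<omega> = lam Y n k \<omega>"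
  unfolding lam_def using assms by simp

lemma lam_diff_const:
  assumes "1 \<le> k" "k < n"
  shows "lam (\<lambda>j \<omega>. X j \<omega> - c) n k \<omega> = lam X n k \<omega>"
proof -
  have "lam (\<lambda>j \<omega>. X j \<omega> - c) n k \<omega> = lam X n k \<omega> - of_real c * (\<Sum>j<n. omega n ^ (k * j))"
    by (simp add: lam_def algebra_simps sum_subtractf sum_distrib_left)
  then show ?thesis
    using sum_omega_power_eq_0[OF assms] by simp
qed

lemma cmod_lam_0: "cmod (lam X n 0 \<omega>) = \<bar>\<Sum>j<n. X j \<omega>\<bar>"
  unfolding lam_def by (simp flip: of_real_sum del: of_real_sum)

lemma sig_min_eq:
  assumes "2 \<le> n"
  shows "sig_min X n \<omega> = min (cmod (lam X n 0 \<omega>)) (Min ((\<lambda>k. cmod (lam X n k \<omega>)) ` {1..<n}))"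
proof -
  have "{0..<n} = insert 0 {1..<n}" "{1..<n} \<noteq> {}"
    using assms by auto
  then show ?thesis
    unfolding sig_min_def by (simp add: Min_insert)
qed

lemma sig_max_eq:
  assumes "2 \<le> n"
  shows "sig_max X n \<omega> = max (cmod (lam X n 0 \<omega>)) (Max ((\<lambda>k. cmod (lam X n k \<omega>)) ` {1..<n}))"
proof -
  have "{0..<n} = insert 0 {1..<n}" "{1..<n} \<noteq> {}"
    using assms by auto
  then show ?thesis
    unfolding sig_max_def by (simp add: Max_insert)
qed

lemma min_max_threshold_iff:
  fixes u m m' a b x y :: real
  assumes "x < u" "u \<le> a + b * y" "b > 0"
  shows "(min u m \<le> x \<and> (max u m' - a) / b \<le> y) \<longleftrightarrow> (m \<le> x \<and> (m' - a) / b \<le> y)"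
  using assms by (auto simp: pos_divide_le_eq min_def max_def algebra_simps)

lemma b_seq_pos:
  assumes "3 \<le> n"
  shows "b_seq n > 0"
proof -
  have "1 < real n / 2"
    using assms by simp
  then show ?thesis
    using assms by (simp add: b_seq_def)
qed

lemma root_powr_less_iff:
  fixes x v s :: real
  assumes "s > 0" "0 \<le> x" "0 \<le> v"
  shows "x powr (1 / s) < v \<longleftrightarrow> x < v powr s"
proof
  assume "x powr (1 / s) < v"
  then have "(x powr (1 / s)) powr s < v powr s"
    using assms by (intro powr_less_mono2) auto
  then show "x < v powr s"
    using assms by (simp add: powr_powr)
next
  assume "x < v powr s"
  then have "x powr (1 / s) < (v powr s) powr (1 / s)"
    using assms by (intro powr_less_mono2) auto
  then show "x powr (1 / s) < v"
    using assms by (simp add: powr_powr)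
qed

lemma lam_measurable [measurable]:
  assumes "\<And>j. X j \<in> borel_measurable M"
  shows "lam X n k \<in> borel_measurable M"
  unfolding lam_def[abs_def] using assms by measurable

lemma trunc_var_measurable [measurable]:
  assumes "\<And>j. X j \<in> borel_measurable M"
  shows "trunc_var M X s n j \<in> borel_measurable M"
  unfolding trunc_var_def[abs_def] using assms by measurable

lemma sig_measurable [measurable]:
  assumes "\<And>j. X j \<in> borel_measurable M"
  shows "sig_min X n \<in> borel_measurable M" "sig_max X n \<in> borel_measurable M"
  unfolding sig_min_def[abs_def] sig_max_def[abs_def] using assms
  by (auto intro!: borel_measurable_Min borel_measurable_Max)

lemma tsig_measurable [measurable]:
  assumes "\<And>j. X j \<in> borel_measurable M"
  shows "tsig_min M X s n \<in> borel_measurable M" "tsig_max M X s n \<in> borel_measurable M"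
  unfolding tsig_min_def[abs_def] tsig_max_def[abs_def] using assms
  by (auto intro!: borel_measurable_Min borel_measurable_Max)

lemma
  assumes "X \<in> borel_measurable M" "Y \<in> borel_measurable M"
    and "distr M borel X = distr M borel Y"
    and "(g :: real \<Rightarrow> real) \<in> borel_measurable borel"
  shows integral_comp_eq_if_distr_eq: "(LINT \<omega>|M. g (X \<omega>)) = (LINT \<omega>|M. g (Y \<omega>))"
    and integrable_comp_iff_if_distr_eq: "integrable M (\<lambda>\<omega>. g (X \<omega>)) \<longleftrightarrow> integrable M (\<lambda>\<omega>. g (Y \<omega>))"
  using integral_distr[of X M borel g] integral_distr[of Y M borel g]
    integrable_distr_eq[of X M borel g] integrable_distr_eq[of Y M borel g] assms
  by simp_all

lemma measure_vimage_eq_if_distr_eq: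
  assumes "X \<in> borel_measurable M" "Y \<in> borel_measurable M"
    and "distr M borel X = distr M borel Y" and "(A :: real set) \<in> sets borel"
  shows "measure M {\<omega> \<in> space M. X \<omega> \<in> A} = measure M {\<omega> \<in> space M. Y \<omega> \<in> A}"
  using assms measure_distr[of X M borel A] measure_distr[of Y M borel A]
  by (simp add: vimage_def Int_def conj_commute)

lemma trunc_var_eq:
  assumes "\<And>j. \<xi> j \<in> borel_measurable M"
    and "\<And>j. distr M borel (\<xi> j) = distr M borel (\<xi> 0)"
  shows "trunc_var M \<xi> s n j \<omega> =
    (if \<bar>\<xi> j \<omega>\<bar> \<le> real n powr (1 / s) then \<xi> j \<omega> else 0)
    - (LINT \<tau>|M. (if \<bar>\<xi> 0 \<tau>\<bar> \<le> real n powr (1 / s) then \<xi> 0 \<tau> else 0))"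
proof -
  have "(\<lambda>v::real. if \<bar>v\<bar> \<le> real n powr (1 / s) then v else 0) \<in> borel_measurable borel"
    by measurable
  from integral_comp_eq_if_distr_eq[OF assms(1,1,2) this] show ?thesis
    unfolding trunc_var_def by simp
qed

lemma lam_trunc_var_eq:
  assumes "\<And>j. \<xi> j \<in> borel_measurable M"
    and "\<And>j. distr M borel (\<xi> j) = distr M borel (\<xi> 0)"
    and "1 \<le> k" "k < n" and "\<forall>j<n. \<bar>\<xi> j \<omega>\<bar> \<le> real n powr (1 / s)"
  shows "lam (trunc_var M \<xi> s n) n k \<omega> = lam \<xi> n k \<omega>"
proof -
  define c where "c = (LINT \<tau>|M. (if \<bar>\<xi> 0 \<tau>\<bar> \<le> real n powr (1 / s) then \<xi> 0 \<tau> else 0))"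
  have "lam (trunc_var M \<xi> s n) n k \<omega> = lam (\<lambda>j \<omega>. \<xi> j \<omega> - c) n k \<omega>"
    using assms by (intro lam_cong) (simp add: trunc_var_eq c_def)
  also have "\<dots> = lam \<xi> n k \<omega>"
    using assms(3,4) by (rule lam_diff_const)
  finally show ?thesis .
qed

lemma sig_event_iff_tsig_event:
  assumes "\<And>j. \<xi> j \<in> borel_measurable M"
    and "\<And>j. distr M borel (\<xi> j) = distr M borel (\<xi> 0)"
    and "3 \<le> n" and "\<forall>j<n. \<bar>\<xi> j \<omega>\<bar> \<le> real n powr (1 / s)"
    and "x < \<bar>\<Sum>j<n. \<xi> j \<omega>\<bar>" and "\<bar>\<Sum>j<n. \<xi> j \<omega>\<bar> \<le> a_seq n + b_seq n * y"
  shows "(sig_min \<xi> n \<omega> \<le> x \<and> (sig_max \<xi> n \<omega> - a_seq n) / b_seq n \<le> y) \<longleftrightarrow>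
    (tsig_min M \<xi> s n \<omega> \<le> x \<and> (tsig_max M \<xi> s n \<omega> - a_seq n) / b_seq n \<le> y)"
proof -
  have "(\<lambda>k. cmod (lam (trunc_var M \<xi> s n) n k \<omega>)) ` {1..<n} = (\<lambda>k. cmod (lam \<xi> n k \<omega>)) ` {1..<n}"
    using assms(1,2,4) by (intro image_cong) (auto simp: lam_trunc_var_eq)
  then show ?thesis
    using assms(3,5,6) b_seq_pos[OF assms(3)]
    by (simp add: sig_min_eq sig_max_eq tsig_min_def tsig_max_def cmod_lam_0 min_max_threshold_iff)
qed

lemma isCont_std_normal_cdf: "isCont (cdf std_normal_distribution) t"
proof -
  have "emeasure (density lborel std_normal_density) {t}
      = (\<integral>\<^sup>+ v. ennreal (std_normal_density v) * indicator {t} v \<partial>lborel)"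
    by (rule emeasure_density) auto
  also have "\<dots> = 0"
    using AE_lborel_singleton[of t]
    by (intro nn_integral_0_iff_AE[THEN iffD2]) (auto elim!: eventually_mono simp: indicator_def)
  finally show ?thesis
    using real_distribution.finite_borel_measure_M[OF real_dist_normal_dist]
    by (simp add: finite_borel_measure.isCont_cdf measure_def)
qed

context prob_space
begin

lemma abs_prob_diff_le:
  assumes "A \<in> events" "B \<in> events" "C \<in> events"
    and "\<And>\<omega>. \<omega> \<in> space M \<Longrightarrow> \<omega> \<notin> C \<Longrightarrow> \<omega> \<in> A \<longleftrightarrow> \<omega> \<in> B"
  shows "\<bar>prob A - prob B\<bar> \<le> prob C"
proof -
  have "prob A \<le> prob (B \<union> C)" "prob B \<le> prob (A \<union> C)"
    using assms sets.sets_into_space by (auto intro!: finite_measure_mono)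
  moreover have "prob (B \<union> C) \<le> prob B + prob C" "prob (A \<union> C) \<le> prob A + prob C"
    using assms by (auto intro!: measure_Un_le)
  ultimately show ?thesis
    by linarith
qed

lemma prob_abs_le_tendsto_0:
  fixes S :: "nat \<Rightarrow> 'a \<Rightarrow> real" and \<Phi> :: "real \<Rightarrow> real" and r c :: "nat \<Rightarrow> real"
  assumes [measurable]: "\<And>n. S n \<in> borel_measurable M"
    and conv: "\<And>t. (\<lambda>n. prob {\<omega> \<in> space M. S n \<omega> / r n \<le> t}) \<longlonglongrightarrow> \<Phi> t"
    and cont: "isCont \<Phi> 0"
    and r_pos: "eventually (\<lambda>n. r n > 0) sequentially"
    and small: "(\<lambda>n. c n / r n) \<longlonglongrightarrow> 0"
  shows "(\<lambda>n. prob {\<omega> \<in> space M. \<bar>S n \<omega>\<bar> \<le> c n}) \<longlonglongrightarrow> 0"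
proof (rule tendsto_iff[THEN iffD2], intro allI impI)
  fix e :: real
  assume "e > 0"
  then obtain d where "d > 0" and d: "\<And>t. \<bar>t\<bar> < d \<Longrightarrow> \<bar>\<Phi> t - \<Phi> 0\<bar> < e / 2"
    using cont unfolding continuous_at_eps_delta dist_real_def by (metis diff_zero half_gt_zero)
  define \<epsilon> where "\<epsilon> = d / 2"
  have "\<epsilon> > 0"
    using \<open>d > 0\<close> by (simp add: \<epsilon>_def)
  have "\<bar>\<Phi> \<epsilon> - \<Phi> 0\<bar> < e / 2" "\<bar>\<Phi> (- \<epsilon>) - \<Phi> 0\<bar> < e / 2"
    using d[of \<epsilon>] d[of "- \<epsilon>"] \<open>d > 0\<close> by (auto simp: \<epsilon>_def)
  then have "\<Phi> \<epsilon> - \<Phi> (- \<epsilon>) < e"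
    by arith
  then have "eventually (\<lambda>n. prob {\<omega> \<in> space M. S n \<omega> / r n \<le> \<epsilon>}
      - prob {\<omega> \<in> space M. S n \<omega> / r n \<le> - \<epsilon>} < e) sequentially"
    by (intro order_tendstoD(2)[OF tendsto_diff[OF conv conv]])
  moreover have "eventually (\<lambda>n. c n / r n < \<epsilon>) sequentially"
    using small \<open>\<epsilon> > 0\<close> by (rule order_tendstoD(2))
  ultimately show "eventually (\<lambda>n. dist (prob {\<omega> \<in> space M. \<bar>S n \<omega>\<bar> \<le> c n}) 0 < e) sequentially"
    using r_pos
  proof eventually_elim
    case (elim n)
    have "- \<epsilon> < S n \<omega> / r n \<and> S n \<omega> / r n < \<epsilon>" if "\<bar>S n \<omega>\<bar> \<le> c n" for \<omega>
    proof -
      have "\<bar>S n \<omega> / r n\<bar> < \<epsilon>"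
        using that elim divide_right_mono[OF that, of "r n"] by (simp add: abs_div)
      then show ?thesis
        by arith
    qed
    then have "{\<omega> \<in> space M. \<bar>S n \<omega>\<bar> \<le> c n}
        \<subseteq> {\<omega> \<in> space M. S n \<omega> / r n \<le> \<epsilon>} - {\<omega> \<in> space M. S n \<omega> / r n \<le> - \<epsilon>}"
      by fastforce
    then have "prob {\<omega> \<in> space M. \<bar>S n \<omega>\<bar> \<le> c n}
        \<le> prob {\<omega> \<in> space M. S n \<omega> / r n \<le> \<epsilon>} - prob {\<omega> \<in> space M. S n \<omega> / r n \<le> - \<epsilon>}"
      using \<open>\<epsilon> > 0\<close> by (subst finite_measure_Diff[symmetric]) (auto intro!: finite_measure_mono)
    then show ?case
      using elim by simp
  qed
qed

lemma prob_abs_gt_tendsto_0: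
  fixes S :: "nat \<Rightarrow> 'a \<Rightarrow> real" and \<Phi> :: "real \<Rightarrow> real" and r c :: "nat \<Rightarrow> real"
  assumes [measurable]: "\<And>n. S n \<in> borel_measurable M"
    and conv: "\<And>t. (\<lambda>n. prob {\<omega> \<in> space M. S n \<omega> / r n \<le> t}) \<longlonglongrightarrow> \<Phi> t"
    and top: "(\<Phi> \<longlongrightarrow> 1) at_top" and bot: "(\<Phi> \<longlongrightarrow> 0) at_bot"
    and r_pos: "eventually (\<lambda>n. r n > 0) sequentially"
    and large: "filterlim (\<lambda>n. c n / r n) at_top sequentially"
  shows "(\<lambda>n. prob {\<omega> \<in> space M. \<bar>S n \<omega>\<bar> > c n}) \<longlonglongrightarrow> 0"
proof (rule tendsto_iff[THEN iffD2], intro allI impI)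
  fix e :: real
  assume "e > 0"
  then have "eventually (\<lambda>t. \<Phi> t > 1 - e / 2) at_top" "eventually (\<lambda>t. \<Phi> t < e / 2) at_bot"
    using order_tendstoD(1)[OF top, of "1 - e / 2"] order_tendstoD(2)[OF bot, of "e / 2"] by auto
  then obtain T1 T2 where T1: "\<And>t. t \<ge> T1 \<Longrightarrow> \<Phi> t > 1 - e / 2"
    and T2: "\<And>t. t \<le> T2 \<Longrightarrow> \<Phi> t < e / 2"
    by (auto simp: eventually_at_top_linorder eventually_at_bot_linorder)
  define T where "T = max T1 (- T2)"
  have T: "\<Phi> T > 1 - e / 2" "\<Phi> (- T) < e / 2"
    using T1 T2 by (simp_all add: T_def)
  have "(\<lambda>n. (1 - prob {\<omega> \<in> space M. S n \<omega> / r n \<le> T}) + prob {\<omega> \<in> space M. S n \<omega> / r n \<le> - T})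
      \<longlonglongrightarrow> (1 - \<Phi> T) + \<Phi> (- T)"
    by (intro tendsto_intros conv)
  moreover have "(1 - \<Phi> T) + \<Phi> (- T) < e"
    using T by linarith
  ultimately have "eventually (\<lambda>n. (1 - prob {\<omega> \<in> space M. S n \<omega> / r n \<le> T})
      + prob {\<omega> \<in> space M. S n \<omega> / r n \<le> - T} < e) sequentially"
    by (rule order_tendstoD(2))
  moreover have "eventually (\<lambda>n. T \<le> c n / r n) sequentially"
    using large by (simp add: filterlim_at_top)
  ultimately show "eventually (\<lambda>n. dist (prob {\<omega> \<in> space M. \<bar>S n \<omega>\<bar> > c n}) 0 < e) sequentially"
    using r_pos
  proof eventually_elim
    case (elim n)
    have "T < S n \<omega> / r n \<or> S n \<omega> / r n < - T" if "\<bar>S n \<omega>\<bar> > c n" for \<omega>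
    proof -
      have "T < \<bar>S n \<omega> / r n\<bar>"
        using that elim divide_strict_right_mono[OF that, of "r n"] by (simp add: abs_div)
      then show ?thesis
        by arith
    qed
    then have "{\<omega> \<in> space M. \<bar>S n \<omega>\<bar> > c n}
        \<subseteq> (space M - {\<omega> \<in> space M. S n \<omega> / r n \<le> T}) \<union> {\<omega> \<in> space M. S n \<omega> / r n \<le> - T}"
      by fastforce
    then have "prob {\<omega> \<in> space M. \<bar>S n \<omega>\<bar> > c n}
        \<le> prob (space M - {\<omega> \<in> space M. S n \<omega> / r n \<le> T}) + prob {\<omega> \<in> space M. S n \<omega> / r n \<le> - T}"
      by (rule finite_measure_mono[THEN order_trans]) (auto intro!: measure_Un_le)
    then show ?case
      using elim by (simp add: prob_compl)
  qed
qed

lemma real_mult_prob_gt_tendsto_0: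
  fixes Y :: "'a \<Rightarrow> real"
  assumes [measurable]: "Y \<in> borel_measurable M"
    and "integrable M Y" and nonneg: "\<And>\<omega>. 0 \<le> Y \<omega>"
  shows "(\<lambda>n. real n * prob {\<omega> \<in> space M. Y \<omega> > real n}) \<longlonglongrightarrow> 0"
proof -
  define Y' where "Y' n \<omega> = Y \<omega> * indicator {\<omega> \<in> space M. Y \<omega> > real n} \<omega>" for n \<omega>
  have [measurable]: "Y' n \<in> borel_measurable M" for n
    unfolding Y'_def by measurable
  have "eventually (\<lambda>n. Y' n \<omega> = 0) sequentially" for \<omega>
  proof -
    obtain N :: nat where "Y \<omega> < real N"
      using reals_Archimedean2 by blast
    then show ?thesis
      unfolding eventually_sequentially Y'_def by (intro exI[of _ N]) (auto simp: indicator_def)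
  qed
  then have lim: "AE \<omega> in M. (\<lambda>n. Y' n \<omega>) \<longlonglongrightarrow> 0"
    by (auto intro: tendsto_eventually)
  have bound: "AE \<omega> in M. norm (Y' n \<omega>) \<le> Y \<omega>" for n
    using nonneg by (auto simp: Y'_def indicator_def)
  have "(\<lambda>n. LINT \<omega>|M. Y' n \<omega>) \<longlonglongrightarrow> 0"
    using integral_dominated_convergence[OF _ _ \<open>integrable M Y\<close> lim bound] by simp
  moreover have "eventually (\<lambda>n. norm (real n * prob {\<omega> \<in> space M. Y \<omega> > real n})
      \<le> (LINT \<omega>|M. Y' n \<omega>)) sequentially"
    unfolding eventually_sequentially
  proof (intro exI[of _ 1] allI impI)
    fix n :: nat
    assume "1 \<le> n"
    have "integrable M (Y' n)"
      by (rule integrable_dominated_convergence2[OF _ _ \<open>integrable M Y\<close> lim bound]) simp_all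
    have "prob {\<omega> \<in> space M. Y \<omega> > real n} \<le> prob {\<omega> \<in> space M. Y' n \<omega> \<ge> real n}"
      by (rule finite_measure_mono) (auto simp: Y'_def indicator_def)
    also have "\<dots> \<le> (LINT \<omega>|M. Y' n \<omega>) / real n"
    proof (rule integral_Markov_inequality_measure[OF \<open>integrable M (Y' n)\<close> sets.top])
      show "AE \<omega> in M. 0 \<le> Y' n \<omega>"
        using nonneg by (simp add: Y'_def)
    qed (use \<open>1 \<le> n\<close> in simp)
    finally show "norm (real n * prob {\<omega> \<in> space M. Y \<omega> > real n}) \<le> (LINT \<omega>|M. Y' n \<omega>)"
      using \<open>1 \<le> n\<close> by (simp add: field_simps)
  qed
  ultimately show ?thesis
    by (rule Lim_null_comparison[rotated])
qed

lemma prob_exists_abs_gt_le: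
  fixes \<xi> :: "nat \<Rightarrow> 'a \<Rightarrow> real"
  assumes "\<And>j. \<xi> j \<in> borel_measurable M"
    and "\<And>j. distr M borel (\<xi> j) = distr M borel (\<xi> 0)"
  shows "prob {\<omega> \<in> space M. \<exists>j<n. t < \<bar>\<xi> j \<omega>\<bar>} \<le> real n * prob {\<omega> \<in> space M. t < \<bar>\<xi> 0 \<omega>\<bar>}"
proof -
  have [measurable]: "\<xi> j \<in> borel_measurable M" for j
    by (rule assms(1))
  have measurable_abs_gt: "{\<omega> \<in> space M. t < \<bar>\<xi> j \<omega>\<bar>} \<in> events" for j
    by measurable
  have "{\<omega> \<in> space M. \<exists>j<n. t < \<bar>\<xi> j \<omega>\<bar>} = (\<Union>j<n. {\<omega> \<in> space M. t < \<bar>\<xi> j \<omega>\<bar>})"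
    by auto
  also have "prob \<dots> \<le> (\<Sum>j<n. prob {\<omega> \<in> space M. t < \<bar>\<xi> j \<omega>\<bar>})"
    using measurable_abs_gt by (intro finite_measure_subadditive_finite) blast+
  also have "\<dots> = (\<Sum>j<n. prob {\<omega> \<in> space M. t < \<bar>\<xi> 0 \<omega>\<bar>})"
  proof (intro sum.cong refl)
    have "{v :: real. t < \<bar>v\<bar>} \<in> sets borel"
      by measurable
    from measure_vimage_eq_if_distr_eq[OF assms(1,1,2) this]
    show "prob {\<omega> \<in> space M. t < \<bar>\<xi> j \<omega>\<bar>} = prob {\<omega> \<in> space M. t < \<bar>\<xi> 0 \<omega>\<bar>}" for j
      by simp
  qed
  finally show ?thesis
    by simp
qed

lemma prob_exists_abs_gt_root_tendsto_0:
  fixes \<xi> :: "nat \<Rightarrow> 'a \<Rightarrow> real"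
  assumes meas: "\<And>j. \<xi> j \<in> borel_measurable M"
    and ident: "\<And>j. distr M borel (\<xi> j) = distr M borel (\<xi> 0)"
    and "s > 0" and "integrable M (\<lambda>\<omega>. \<bar>\<xi> 0 \<omega>\<bar> powr s)"
  shows "(\<lambda>n. prob {\<omega> \<in> space M. \<exists>j<n. real n powr (1 / s) < \<bar>\<xi> j \<omega>\<bar>}) \<longlonglongrightarrow> 0"
proof (rule Lim_null_comparison)
  have [measurable]: "\<xi> 0 \<in> borel_measurable M"
    by (rule meas)
  show "(\<lambda>n. real n * prob {\<omega> \<in> space M. \<bar>\<xi> 0 \<omega>\<bar> powr s > real n}) \<longlonglongrightarrow> 0"
    using assms(4) by (intro real_mult_prob_gt_tendsto_0) auto
  show "eventually (\<lambda>n. norm (prob {\<omega> \<in> space M. \<exists>j<n. real n powr (1 / s) < \<bar>\<xi> j \<omega>\<bar>})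
      \<le> real n * prob {\<omega> \<in> space M. \<bar>\<xi> 0 \<omega>\<bar> powr s > real n}) sequentially"
  proof (intro always_eventually allI)
    fix n
    have "norm (prob {\<omega> \<in> space M. \<exists>j<n. real n powr (1 / s) < \<bar>\<xi> j \<omega>\<bar>})
        \<le> real n * prob {\<omega> \<in> space M. real n powr (1 / s) < \<bar>\<xi> 0 \<omega>\<bar>}"
      using prob_exists_abs_gt_le[of \<xi>, OF meas ident] by simp
    also have "{\<omega> \<in> space M. real n powr (1 / s) < \<bar>\<xi> 0 \<omega>\<bar>} = {\<omega> \<in> space M. \<bar>\<xi> 0 \<omega>\<bar> powr s > real n}"
      using \<open>s > 0\<close> by (auto simp: root_powr_less_iff)
    finally show "norm (prob {\<omega> \<in> space M. \<exists>j<n. real n powr (1 / s) < \<bar>\<xi> j \<omega>\<bar>})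
        \<le> real n * prob {\<omega> \<in> space M. \<bar>\<xi> 0 \<omega>\<bar> powr s > real n}" .
  qed
qed

lemma partial_sum_cdf_tendsto_std_normal:
  fixes \<xi> :: "nat \<Rightarrow> 'a \<Rightarrow> real"
  assumes meas: "\<And>j. \<xi> j \<in> borel_measurable M"
    and indep: "indep_vars (\<lambda>_. borel) \<xi> UNIV"
    and ident: "\<And>j. distr M borel (\<xi> j) = distr M borel (\<xi> 0)"
    and "expectation (\<xi> 0) = 0"
    and "integrable M (\<lambda>\<omega>. (\<xi> 0 \<omega>)\<^sup>2)" and "expectation (\<lambda>\<omega>. (\<xi> 0 \<omega>)\<^sup>2) = 1"
  shows "(\<lambda>n. prob {\<omega> \<in> space M. (\<Sum>j<n. \<xi> j \<omega>) / sqrt (real n) \<le> t})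
    \<longlonglongrightarrow> cdf std_normal_distribution t"
proof -
  have "expectation (\<xi> j) = expectation (\<xi> 0)"
    and "integrable M (\<lambda>\<omega>. (\<xi> j \<omega>)\<^sup>2) \<longleftrightarrow> integrable M (\<lambda>\<omega>. (\<xi> 0 \<omega>)\<^sup>2)"
    and "expectation (\<lambda>\<omega>. (\<xi> j \<omega>)\<^sup>2) = expectation (\<lambda>\<omega>. (\<xi> 0 \<omega>)\<^sup>2)" for j
    by (rule integral_comp_eq_if_distr_eq[OF meas meas ident, where g="\<lambda>v. v"]
        integrable_comp_iff_if_distr_eq[OF meas meas ident, where g="\<lambda>v. v\<^sup>2"]
        integral_comp_eq_if_distr_eq[OF meas meas ident, where g="\<lambda>v. v\<^sup>2"], measurable)+
  then have "expectation (\<xi> j) = 0" "integrable M (\<lambda>\<omega>. (\<xi> j \<omega>)\<^sup>2)" "variance (\<xi> j) = 1\<^sup>2" for j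
    using assms(4-6) by simp_all
  then have "weak_conv_m (\<lambda>n. distr M borel (\<lambda>\<omega>. (\<Sum>j<n. \<xi> j \<omega>) / sqrt (real n * 1\<^sup>2)))
      std_normal_distribution"
    by (intro central_limit_theorem_zero_mean[OF indep _ _ _ _ ident]) simp_all
  then have "(\<lambda>n. cdf (distr M borel (\<lambda>\<omega>. (\<Sum>j<n. \<xi> j \<omega>) / sqrt (real n))) t)
      \<longlonglongrightarrow> cdf std_normal_distribution t"
    using isCont_std_normal_cdf unfolding weak_conv_m_def weak_conv_def by simp
  moreover have "cdf (distr M borel (\<lambda>\<omega>. (\<Sum>j<n. \<xi> j \<omega>) / sqrt (real n))) t
      = prob {\<omega> \<in> space M. (\<Sum>j<n. \<xi> j \<omega>) / sqrt (real n) \<le> t}" for n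
    using meas by (simp add: cdf_def measure_distr vimage_def Int_def conj_commute)
  ultimately show ?thesis
    by simp
qed

lemma abs_prob_sig_event_diff_le:
  fixes \<xi> :: "nat \<Rightarrow> 'a \<Rightarrow> real"
  assumes meas: "\<And>j. \<xi> j \<in> borel_measurable M"
    and ident: "\<And>j. distr M borel (\<xi> j) = distr M borel (\<xi> 0)"
    and "3 \<le> n"
  shows "\<bar>prob {\<omega> \<in> space M. sig_min \<xi> n \<omega> \<le> x \<and> (sig_max \<xi> n \<omega> - a_seq n) / b_seq n \<le> y}
      - prob {\<omega> \<in> space M. tsig_min M \<xi> s n \<omega> \<le> x \<and> (tsig_max M \<xi> s n \<omega> - a_seq n) / b_seq n \<le> y}\<bar>
    \<le> prob {\<omega> \<in> space M. \<bar>\<Sum>j<n. \<xi> j \<omega>\<bar> \<le> x}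
      + prob {\<omega> \<in> space M. a_seq n + b_seq n * y < \<bar>\<Sum>j<n. \<xi> j \<omega>\<bar>}
      + prob {\<omega> \<in> space M. \<exists>j<n. real n powr (1 / s) < \<bar>\<xi> j \<omega>\<bar>}"
    (is "\<bar>prob ?A - prob ?B\<bar> \<le> prob ?C\<^sub>1 + prob ?C\<^sub>2 + prob ?C\<^sub>3")
proof -
  have [measurable]: "\<xi> j \<in> borel_measurable M" for j
    by (rule meas)
  have events: "?A \<in> events" "?B \<in> events" "?C\<^sub>1 \<in> events" "?C\<^sub>2 \<in> events" "?C\<^sub>3 \<in> events"
    by measurable
  have "\<bar>prob ?A - prob ?B\<bar> \<le> prob (?C\<^sub>1 \<union> ?C\<^sub>2 \<union> ?C\<^sub>3)"
  proof (rule abs_prob_diff_le)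
    show "\<omega> \<in> ?A \<longleftrightarrow> \<omega> \<in> ?B" if "\<omega> \<in> space M" "\<omega> \<notin> ?C\<^sub>1 \<union> ?C\<^sub>2 \<union> ?C\<^sub>3" for \<omega>
    proof -
      have "\<forall>j<n. \<bar>\<xi> j \<omega>\<bar> \<le> real n powr (1 / s)" "x < \<bar>\<Sum>j<n. \<xi> j \<omega>\<bar>"
        "\<bar>\<Sum>j<n. \<xi> j \<omega>\<bar> \<le> a_seq n + b_seq n * y"
        using that by (auto simp: not_less dest: leD)
      from sig_event_iff_tsig_event[where M=M, OF meas ident \<open>3 \<le> n\<close> this] show ?thesis
        by simp
    qed
  qed (use events in blast)+
  also have "\<dots> \<le> prob (?C\<^sub>1 \<union> ?C\<^sub>2) + prob ?C\<^sub>3"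
    using events by (intro measure_Un_le) blast+
  also have "\<dots> \<le> prob ?C\<^sub>1 + prob ?C\<^sub>2 + prob ?C\<^sub>3"
    using events by (intro add_right_mono measure_Un_le) blast+
  finally show ?thesis .
qed

end

theorem lemma2p3:
  fixes M :: "'a measure" and \<xi> :: "nat \<Rightarrow> 'a \<Rightarrow> real" and \<delta> x y :: real
  assumes P: "prob_space M"
    and meas: "\<And>j. \<xi> j \<in> borel_measurable M"
    and indep: "prob_space.indep_vars M (\<lambda>_. borel) \<xi> UNIV"
    and ident: "\<And>j. distr M borel (\<xi> j) = distr M borel (\<xi> 0)"
    and nondeg: "\<not> (\<exists>c. AE \<omega> in M. \<xi> 0 \<omega> = c)"
    and int1: "integrable M (\<xi> 0)" and mean0: "(LINT \<omega>|M. \<xi> 0 \<omega>) = 0"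
    and int2: "integrable M (\<lambda>\<omega>. (\<xi> 0 \<omega>)\<^sup>2)" and var1: "(LINT \<omega>|M. (\<xi> 0 \<omega>)\<^sup>2) = 1"
    and delta: "\<delta> > 0"
    and lyap: "integrable M (\<lambda>\<omega>. \<bar>\<xi> 0 \<omega>\<bar> powr (2 + \<delta>))"
  shows "(\<lambda>n. \<bar>measure M {\<omega> \<in> space M. sig_min \<xi> n \<omega> \<le> x \<and>
                    (sig_max \<xi> n \<omega> - a_seq n) / b_seq n \<le> y}
              - measure M {\<omega> \<in> space M. tsig_min M \<xi> (2 + \<delta>) n \<omega> \<le> x \<and>
                    (tsig_max M \<xi> (2 + \<delta>) n \<omega> - a_seq n) / b_seq n \<le> y}\<bar>)
         \<longlonglongrightarrow> 0"
proof -
  interpret prob_space M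
    by (rule P)
  define S where "S n \<omega> = (\<Sum>j<n. \<xi> j \<omega>)" for n \<omega>
  have [measurable]: "S n \<in> borel_measurable M" for n
    unfolding S_def using meas by measurable
  have clt: "(\<lambda>n. prob {\<omega> \<in> space M. S n \<omega> / sqrt (real n) \<le> t}) \<longlonglongrightarrow> cdf std_normal_distribution t" for t
    unfolding S_def using partial_sum_cdf_tendsto_std_normal[OF meas indep ident mean0 int2 var1] .
  have sqrt_pos: "eventually (\<lambda>n. sqrt (real n) > 0) sequentially"
    by real_asymp
  have small: "(\<lambda>n. prob {\<omega> \<in> space M. \<bar>S n \<omega>\<bar> \<le> x}) \<longlonglongrightarrow> 0"
    by (rule prob_abs_le_tendsto_0[OF _ clt isCont_std_normal_cdf sqrt_pos]) (measurable, real_asymp)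
  have large: "(\<lambda>n. prob {\<omega> \<in> space M. a_seq n + b_seq n * y < \<bar>S n \<omega>\<bar>}) \<longlonglongrightarrow> 0"
    using real_dist_normal_dist
    by (intro prob_abs_gt_tendsto_0[OF _ clt _ _ sqrt_pos])
      (auto simp: a_seq_def b_seq_def real_distribution.cdf_lim_at_top_prob
        finite_borel_measure.cdf_lim_at_bot real_distribution.finite_borel_measure_M, real_asymp)
  have bad: "(\<lambda>n. prob {\<omega> \<in> space M. \<exists>j<n. real n powr (1 / (2 + \<delta>)) < \<bar>\<xi> j \<omega>\<bar>}) \<longlonglongrightarrow> 0"
    using delta lyap by (intro prob_exists_abs_gt_root_tendsto_0[of \<xi>, OF meas ident]) auto
  define bound where "bound n = prob {\<omega> \<in> space M. \<bar>S n \<omega>\<bar> \<le> x}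
      + prob {\<omega> \<in> space M. a_seq n + b_seq n * y < \<bar>S n \<omega>\<bar>}
      + prob {\<omega> \<in> space M. \<exists>j<n. real n powr (1 / (2 + \<delta>)) < \<bar>\<xi> j \<omega>\<bar>}" for n
  have "bound \<longlonglongrightarrow> 0"
    unfolding bound_def using tendsto_add[OF tendsto_add[OF small large] bad] by simp
  then show ?thesis
    by (rule Lim_null_comparison[rotated])
      (unfold eventually_sequentially real_norm_def abs_abs bound_def S_def,
        intro exI[of _ 3] allI impI abs_prob_sig_event_diff_le[of \<xi>, OF meas ident])
qed

end
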